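(* Let $U$ be a finite-dimensional real vector space and $\lambda\colon U_{\mathbb C}\to\mathbb C$ a polynomial function. For every entire function $\Psi\colon\mathbb C\to\mathbb C$ of finite order, there exists a holomorphic function $\nu$ on $U_{\mathbb C}$ with moderate vertical growth whose zero set is exactly $\lambda^{-1}(\{z\in\mathbb C:\Psi(z)=0\})$.
   Context: The order of an entire function $\Psi$ is the infimum of $e\ge0$ such that $|\Psi(z)|<C_e\exp(|z|^e)$ for all $z$ and some $C_e>0$. A holomorphic $\nu$ on $U_{\mathbb C}$ has moderate vertical growth if for every $M>0$ there is $r_M\in\mathbb R$ with $\sup_{\|\mathrm{Re}\,z\|<M}|\nu(z)|(1+\|z\|)^{r_M}<\infty$ for a Euclidean norm $\|\cdot\|$ on $U_{\mathbb C}$ (here $\mathrm{Re}\colon U_{\mathbb C}\to U$ is the real part). *)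

theory Defs
  imports "HOL-Analysis.Analysis"
begin

text \<open>U is modelled as real^'n (any finite-dimensional real vector space, of dimension
CARD('n) >= 1), and its complexification U_C as complex^'n with the Euclidean norm.\<close>

inductive poly_fun_Cn :: "(complex^'n \<Rightarrow> complex) \<Rightarrow> bool" where
  const: "poly_fun_Cn (\<lambda>z. c)"
| coord: "poly_fun_Cn (\<lambda>z. z $ i)"
| add: "poly_fun_Cn p \<Longrightarrow> poly_fun_Cn q \<Longrightarrow> poly_fun_Cn (\<lambda>z. p z + q z)"
| mult: "poly_fun_Cn p \<Longrightarrow> poly_fun_Cn q \<Longrightarrow> poly_fun_Cn (\<lambda>z. p z * q z)"

definition holomorphic_Cn :: "(complex^'n \<Rightarrow> complex) \<Rightarrow> bool" where
  "holomorphic_Cn f \<longleftrightarrow>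
     (\<forall>z. \<exists>D. (f has_derivative D) (at z) \<and> (\<forall>(c::complex) v. D (c *s v) = c * D v))"

definition Re_vec :: "complex^'n \<Rightarrow> real^'n" where
  "Re_vec z = (\<chi> i. Re (z $ i))"

definition moderate_vertical_growth :: "(complex^'n \<Rightarrow> complex) \<Rightarrow> bool" where
  "moderate_vertical_growth \<nu> \<longleftrightarrow>
     (\<forall>M>0. \<exists>r::real. \<exists>B::real. \<forall>z. norm (Re_vec z) < M \<longrightarrow>
        norm (\<nu> z) * (1 + norm z) powr r \<le> B)"

text \<open>Finite order: the set of admissible exponents e is nonempty (its infimum is finite).\<close>
definition finite_order :: "(complex \<Rightarrow> complex) \<Rightarrow> bool" where
  "finite_order \<Psi> \<longleftrightarrow>
     (\<exists>e::real. e \<ge> 0 \<and> (\<exists>C>0. \<forall>z. norm (\<Psi> z) < C * exp (norm z powr e)))"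

end

theory Submission
  imports Defs
begin

text \<open>Take \<open>\<nu>(z) = \<Psi>(\<lambda>(z)) exp(-\<Sum>\<^sub>i z\<^sub>i\<^sup>P)\<close>, whose zeros are those of \<open>\<Psi> \<circ> \<lambda>\<close>.
Since \<open>\<lambda>\<close> grows polynomially and \<open>\<Psi>\<close> has finite order, \<open>|\<Psi>(\<lambda>(z))| \<le> C exp(A (1 + \<parallel>z\<parallel>)\<^sup>N)\<close>.
If \<open>4 | P\<close> then \<open>(i y)\<^sup>P = y\<^sup>P\<close>, so on a vertical strip \<open>|Re z| < M\<close> one has
\<open>Re z\<^sub>k\<^sup>P \<ge> (Im z\<^sub>k)\<^sup>P - P M (|Im z\<^sub>k| + M)\<^sup>P\<^sup>-\<^sup>1\<close>. With \<open>t = max\<^sub>k |Im z\<^sub>k|\<close> the exponent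
\<open>A (1 + \<parallel>z\<parallel>)\<^sup>N - Re \<Sum>\<^sub>k z\<^sub>k\<^sup>P\<close> is then at most \<open>A' (1 + M + t)\<^sup>P\<^sup>-\<^sup>1 - t\<^sup>P\<close> for a constant \<open>A'\<close>,
which is bounded above in \<open>t \<ge> 0\<close> once \<open>P > N\<close>: so \<open>\<nu>\<close> is even bounded on every vertical strip.\<close>

lemma holomorphic_CnE:
  assumes "holomorphic_Cn f"
  obtains D where "(f has_derivative D) (at z)" "\<And>c v. D (c *s v) = c * D v"
  using assms unfolding holomorphic_Cn_def by blast

lemma holomorphic_Cn_const: "holomorphic_Cn (\<lambda>z. c)"
  unfolding holomorphic_Cn_def by (auto intro!: exI[of _ "\<lambda>v. 0"])

lemma holomorphic_Cn_nth: "holomorphic_Cn (\<lambda>z. z $ i)"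
  unfolding holomorphic_Cn_def
  by (auto intro!: exI[of _ "\<lambda>v. v $ i"] bounded_linear.has_derivative[OF bounded_linear_vec_nth])

lemma holomorphic_Cn_add:
  assumes "holomorphic_Cn p" "holomorphic_Cn q"
  shows "holomorphic_Cn (\<lambda>z. p z + q z)"
  unfolding holomorphic_Cn_def
proof
  fix z
  obtain Dp Dq where "(p has_derivative Dp) (at z)" "(q has_derivative Dq) (at z)"
    and "\<And>c v. Dp (c *s v) = c * Dp v" "\<And>c v. Dq (c *s v) = c * Dq v"
    using assms by (metis holomorphic_CnE)
  then show "\<exists>D. ((\<lambda>z. p z + q z) has_derivative D) (at z) \<and> (\<forall>(c::complex) v. D (c *s v) = c * D v)"
    by (intro exI[of _ "\<lambda>v. Dp v + Dq v"]) (auto intro: has_derivative_add simp: distrib_left)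
qed

lemma holomorphic_Cn_mult:
  assumes "holomorphic_Cn p" "holomorphic_Cn q"
  shows "holomorphic_Cn (\<lambda>z. p z * q z)"
  unfolding holomorphic_Cn_def
proof
  fix z
  obtain Dp Dq where "(p has_derivative Dp) (at z)" "(q has_derivative Dq) (at z)"
    and "\<And>c v. Dp (c *s v) = c * Dp v" "\<And>c v. Dq (c *s v) = c * Dq v"
    using assms by (metis holomorphic_CnE)
  then show "\<exists>D. ((\<lambda>z. p z * q z) has_derivative D) (at z) \<and> (\<forall>(c::complex) v. D (c *s v) = c * D v)"
    by (intro exI[of _ "\<lambda>v. p z * Dq v + Dp v * q z"] conjI has_derivative_mult)
      (auto simp: algebra_simps)
qed

lemma holomorphic_Cn_compose:
  assumes "h holomorphic_on UNIV" "holomorphic_Cn f"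
  shows "holomorphic_Cn (\<lambda>z. h (f z))"
  unfolding holomorphic_Cn_def
proof
  fix z
  obtain D where D: "(f has_derivative D) (at z)" "\<And>c v. D (c *s v) = c * D v"
    using assms(2) by (metis holomorphic_CnE)
  have "h field_differentiable at (f z)"
    using assms(1) holomorphic_on_imp_differentiable_at by blast
  then obtain h' where "(h has_derivative (*) h') (at (f z))"
    unfolding field_differentiable_def using has_field_derivative_imp_has_derivative by blast
  with D show "\<exists>D. ((\<lambda>z. h (f z)) has_derivative D) (at z) \<and> (\<forall>(c::complex) v. D (c *s v) = c * D v)"
    by (intro exI[of _ "\<lambda>v. h' * D v"]) (auto intro: has_derivative_compose simp: algebra_simps)
qed

lemma poly_fun_Cn_imp_holomorphic_Cn: "poly_fun_Cn p \<Longrightarrow> holomorphic_Cn p"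
  by (induction rule: poly_fun_Cn.induct)
    (auto intro: holomorphic_Cn_const holomorphic_Cn_nth holomorphic_Cn_add holomorphic_Cn_mult)

lemma poly_fun_Cn_power: "poly_fun_Cn p \<Longrightarrow> poly_fun_Cn (\<lambda>z. p z ^ k)"
  by (induction k) (auto intro: poly_fun_Cn.intros poly_fun_Cn.const[of 1, simplified])

lemma poly_fun_Cn_sum:
  "finite S \<Longrightarrow> (\<And>i. i \<in> S \<Longrightarrow> poly_fun_Cn (f i)) \<Longrightarrow> poly_fun_Cn (\<lambda>z. \<Sum>i\<in>S. f i z)"
  by (induction S rule: finite_induct) (auto intro: poly_fun_Cn.intros poly_fun_Cn.const[of 0, simplified])

lemma poly_fun_Cn_polynomial_growth:
  fixes p :: "complex^'n \<Rightarrow> complex"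
  shows "poly_fun_Cn p \<Longrightarrow> \<exists>K d. K \<ge> 0 \<and> (\<forall>z. norm (p z) \<le> K * (1 + norm z) ^ d)"
proof (induction rule: poly_fun_Cn.induct)
  case (const c)
  show ?case by (intro exI[of _ "norm c"] exI[of _ 0]) auto
next
  case (coord i)
  have "norm (z $ i) \<le> 1 * (1 + norm z) ^ 1" for z
    using Finite_Cartesian_Product.norm_nth_le[of z i] by simp
  then show ?case by (metis zero_le_one)
next
  case (add p q)
  then obtain Kp dp Kq dq where "Kp \<ge> 0" "\<And>z. norm (p z) \<le> Kp * (1 + norm z) ^ dp"
    and "Kq \<ge> 0" "\<And>z. norm (q z) \<le> Kq * (1 + norm z) ^ dq" by blast
  moreover have "(1 + norm z) ^ a \<le> (1 + norm z) ^ max dp dq" if "a \<in> {dp, dq}" for z :: "complex^'n" and a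
    using that by (intro power_increasing) auto
  ultimately have "norm (p z + q z) \<le> (Kp + Kq) * (1 + norm z) ^ max dp dq" for z
    by (smt (verit, best) insertI1 insertI2 distrib_right mult_left_mono norm_triangle_ineq)
  then show ?case using \<open>Kp \<ge> 0\<close> \<open>Kq \<ge> 0\<close> by (metis add_nonneg_nonneg)
next
  case (mult p q)
  then obtain Kp dp Kq dq where "Kp \<ge> 0" "\<And>z. norm (p z) \<le> Kp * (1 + norm z) ^ dp"
    and "Kq \<ge> 0" "\<And>z. norm (q z) \<le> Kq * (1 + norm z) ^ dq" by blast
  then have "norm (p z * q z) \<le> (Kp * (1 + norm z) ^ dp) * (Kq * (1 + norm z) ^ dq)" for z
    unfolding norm_mult by (intro mult_mono) auto
  then have "norm (p z * q z) \<le> (Kp * Kq) * (1 + norm z) ^ (dp + dq)" for z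
    by (simp add: power_add mult_ac)
  then show ?case using \<open>Kp \<ge> 0\<close> \<open>Kq \<ge> 0\<close> by (metis zero_le_mult_iff)
qed

lemma finite_order_compose_polynomial_growth:
  fixes f :: "'a::real_normed_vector \<Rightarrow> complex"
  assumes "finite_order \<Psi>" "K \<ge> 0" "\<And>z. norm (f z) \<le> K * (1 + norm z) ^ d"
  obtains C A N where "C > 0" "A \<ge> 0" "\<And>z. norm (\<Psi> (f z)) \<le> C * exp (A * (1 + norm z) ^ N)"
proof -
  obtain e C where "e \<ge> 0" "C > 0" and \<Psi>_bound: "\<And>w. norm (\<Psi> w) < C * exp (norm w powr e)"
    using assms(1) unfolding finite_order_def by blast
  define N where "N = nat \<lceil>real d * e\<rceil>"
  have "norm (\<Psi> (f z)) \<le> C * exp (K powr e * (1 + norm z) ^ N)" for z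
  proof -
    have "1 \<le> 1 + norm z" by simp
    have "norm (f z) powr e \<le> (K * (1 + norm z) ^ d) powr e"
      by (rule powr_mono2[OF \<open>e \<ge> 0\<close> norm_ge_zero assms(3)])
    also have "\<dots> = K powr e * ((1 + norm z) powr real d) powr e"
      by (simp add: powr_mult powr_realpow add_pos_nonneg)
    also have "\<dots> = K powr e * (1 + norm z) powr (real d * e)"
      by (simp add: powr_powr)
    also have "\<dots> \<le> K powr e * (1 + norm z) powr real N"
      unfolding N_def using \<open>1 \<le> 1 + norm z\<close> by (intro mult_left_mono powr_mono) (linarith | simp)+
    also have "\<dots> = K powr e * (1 + norm z) ^ N"
      by (subst powr_realpow) (auto intro: add_pos_nonneg)
    finally show ?thesis
      using \<Psi>_bound[of "f z"] \<open>C > 0\<close> by (smt (verit) exp_le_cancel_iff mult_left_mono)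
  qed
  with \<open>C > 0\<close> show thesis by (intro that[of C "K powr e"]) auto
qed

lemma norm_power_diff_le:
  fixes w v :: "'a::real_normed_field"
  assumes "norm w \<le> R" "norm v \<le> R"
  shows "norm (w ^ n - v ^ n) \<le> n * R ^ (n - 1) * norm (w - v)"
proof -
  have "0 \<le> R"
    using assms(2) norm_ge_zero order_trans by blast
  have "norm (\<Sum>i<n. v ^ (n - Suc i) * w ^ i) \<le> (\<Sum>i<n. R ^ (n - Suc i) * R ^ i)"
    using assms \<open>0 \<le> R\<close> by (intro sum_norm_le)
      (auto simp: norm_mult norm_power intro!: mult_mono power_mono)
  also have "\<dots> = n * R ^ (n - 1)"
    by (simp add: power_add[symmetric])
  finally show ?thesis
    by (simp add: power_diff_sumr2 norm_mult mult.commute mult_left_mono)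
qed

lemma Re_power_ge:
  fixes w :: complex
  assumes "4 dvd P" "\<bar>Re w\<bar> \<le> M"
  shows "Im w ^ P - P * M * (\<bar>Im w\<bar> + M) ^ (P - 1) \<le> Re (w ^ P)"
proof -
  define v where "v = \<i> * Im w"
  have "v ^ P = Im w ^ P"
    using assms(1) by (auto simp: v_def power_mult_distrib power_mult elim!: dvdE)
  moreover have "norm (w ^ P - v ^ P) \<le> P * (\<bar>Im w\<bar> + M) ^ (P - 1) * M"
  proof -
    have "norm w \<le> \<bar>Im w\<bar> + M" "norm v \<le> \<bar>Im w\<bar> + M" "norm (w - v) = \<bar>Re w\<bar>"
      using cmod_le[of w] assms(2) by (auto simp: v_def norm_mult cmod_def)
    then show ?thesis
      using norm_power_diff_le[of w _ v P] assms(2)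
      by (smt (verit) mult_left_mono of_nat_0_le_iff zero_le_mult_iff zero_le_power abs_ge_zero)
  qed
  moreover have "Re (w ^ P) = Re (v ^ P) + Re (w ^ P - v ^ P)" by simp
  ultimately show ?thesis
    using abs_Re_le_cmod[of "w ^ P - v ^ P"] by (simp add: mult_ac)
qed

lemma bdd_above_shifted_power_minus_power:
  fixes A c :: real
  assumes "0 \<le> c" "k < P"
  shows "bdd_above ((\<lambda>t. A * (c + t) ^ k - t ^ P) ` {0..})"
proof -
  define T where "T = max 1 (max c (\<bar>A\<bar> * 2 ^ k))"
  have "A * (c + t) ^ k - t ^ P \<le> \<bar>A\<bar> * (c + T) ^ k" if "0 \<le> t" for t
  proof (cases "t \<le> T")
    case True
    then have "A * (c + t) ^ k \<le> \<bar>A\<bar> * (c + T) ^ k"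
      using assms(1) that by (smt (verit) abs_ge_self mult_mono power_mono zero_le_power)
    moreover have "0 \<le> t ^ P"
      using that by simp
    ultimately show ?thesis
      by linarith
  next
    case False
    then have "c \<le> t" "\<bar>A\<bar> * 2 ^ k \<le> t" "1 \<le> t"
      unfolding T_def by auto
    have "A * (c + t) ^ k \<le> \<bar>A\<bar> * (2 * t) ^ k"
      using \<open>c \<le> t\<close> assms(1) by (smt (verit) abs_ge_self mult_mono power_mono zero_le_power)
    also have "\<dots> = (\<bar>A\<bar> * 2 ^ k) * t ^ k"
      by (simp add: power_mult_distrib)
    also have "\<dots> \<le> t ^ Suc k"
      using \<open>\<bar>A\<bar> * 2 ^ k \<le> t\<close> that by (simp add: mult_right_mono)
    also have "\<dots> \<le> t ^ P"
      using \<open>1 \<le> t\<close> assms(2) by (intro power_increasing) auto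
    finally have "A * (c + t) ^ k - t ^ P \<le> 0"
      by simp
    moreover have "0 \<le> \<bar>A\<bar> * (c + T) ^ k"
      using assms(1) T_def by simp
    ultimately show ?thesis
      by linarith
  qed
  then show ?thesis
    by (auto simp: bdd_above_def)
qed

lemma norm_le_card_mult_components:
  fixes z :: "complex^'n" and M t :: real
  assumes "\<And>i. \<bar>Re (z $ i)\<bar> \<le> M" "\<And>i. \<bar>Im (z $ i)\<bar> \<le> t"
  shows "norm z \<le> CARD('n) * (M + t)"
proof -
  have "norm z \<le> (\<Sum>i\<in>UNIV. norm (z $ i))"
    unfolding norm_vec_def by (rule L2_set_le_sum) auto
  also have "\<dots> \<le> (\<Sum>i\<in>(UNIV::'n set). M + t)"
    using assms cmod_le by (intro sum_mono) (smt (verit))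
  finally show ?thesis
    by simp
qed

lemma Re_sum_powers_ge:
  fixes z :: "complex^'n"
  assumes "4 dvd P" "\<And>i. \<bar>Re (z $ i)\<bar> \<le> M" "\<And>i. \<bar>Im (z $ i)\<bar> \<le> \<bar>Im (z $ j)\<bar>"
  shows "\<bar>Im (z $ j)\<bar> ^ P - CARD('n) * (P * M * (\<bar>Im (z $ j)\<bar> + M) ^ (P - 1))
           \<le> Re (\<Sum>i\<in>UNIV. z $ i ^ P)"
proof -
  let ?t = "\<bar>Im (z $ j)\<bar>"
  have "0 \<le> M"
    using assms(2) abs_ge_zero order_trans by blast
  have "\<bar>Im (z $ i)\<bar> ^ P - P * M * (?t + M) ^ (P - 1) \<le> Re (z $ i ^ P)" for i
  proof -
    have "P * M * (\<bar>Im (z $ i)\<bar> + M) ^ (P - 1) \<le> P * M * (?t + M) ^ (P - 1)"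
      using assms(3)[of i] \<open>0 \<le> M\<close> by (intro mult_left_mono power_mono) auto
    moreover have "\<bar>Im (z $ i)\<bar> ^ P = Im (z $ i) ^ P"
      using assms(1) by (metis dvd_trans even_numeral power_even_abs)
    ultimately show ?thesis
      using Re_power_ge[OF assms(1,2)] by (smt (verit))
  qed
  then have "(\<Sum>i\<in>UNIV. \<bar>Im (z $ i)\<bar> ^ P - P * M * (?t + M) ^ (P - 1)) \<le> Re (\<Sum>i\<in>UNIV. z $ i ^ P)"
    by (simp add: sum_mono)
  moreover have "?t ^ P \<le> (\<Sum>i\<in>UNIV. \<bar>Im (z $ i)\<bar> ^ P)"
    by (rule member_le_sum) auto
  ultimately show ?thesis
    by (simp add: sum_subtractf)
qed

lemma moderate_vertical_growthI_bounded:
  fixes \<nu> :: "complex^'n \<Rightarrow> complex"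
  assumes "\<And>M. M > 0 \<Longrightarrow> \<exists>B. \<forall>z. norm (Re_vec z) < M \<longrightarrow> norm (\<nu> z) \<le> B"
  shows "moderate_vertical_growth \<nu>"
  unfolding moderate_vertical_growth_def
proof (intro allI impI)
  fix M :: real
  assume "M > 0"
  then obtain B where "\<forall>z. norm (Re_vec z) < M \<longrightarrow> norm (\<nu> z) \<le> B"
    using assms by blast
  moreover have "(1 + norm z) powr 0 = 1" for z :: "complex^'n"
    by (metis add_nonneg_eq_0_iff norm_ge_zero powr_zero_eq_one zero_le_one zero_neq_one)
  ultimately have "\<forall>z. norm (Re_vec z) < M \<longrightarrow> norm (\<nu> z) * (1 + norm z) powr 0 \<le> B"
    by (simp only: mult_1_right)
  then show "\<exists>r B. \<forall>z. norm (Re_vec z) < M \<longrightarrow> norm (\<nu> z) * (1 + norm z) powr r \<le> B"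
    by blast
qed

lemma moderate_vertical_growth_mult_exp_neg_sum_powers:
  fixes f :: "complex^'n \<Rightarrow> complex"
  assumes f_bound: "\<And>z. norm (f z) \<le> C * exp (A * (1 + norm z) ^ N)"
    and "A \<ge> 0" "4 dvd P" "N < P"
  shows "moderate_vertical_growth (\<lambda>z. f z * exp (- (\<Sum>i\<in>UNIV. z $ i ^ P)))"
proof (rule moderate_vertical_growthI_bounded)
  fix M :: real
  assume "M > 0"
  define n where "n = real CARD('n)"
  define c where "c = 1 + M"
  define A' where "A' = A * n ^ N + n * (P * M)"
  have "n \<ge> 1" "c \<ge> 1"
    using \<open>M > 0\<close> by (auto simp: n_def c_def)
  have "0 \<le> C"
    using f_bound[of 0] by (smt (verit) exp_gt_zero zero_le_mult_iff norm_ge_zero)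
  obtain B where B: "\<And>t. 0 \<le> t \<Longrightarrow> A' * (c + t) ^ (P - 1) - t ^ P \<le> B"
    using bdd_above_shifted_power_minus_power[of c "P - 1" P A'] \<open>c \<ge> 1\<close> \<open>N < P\<close>
    by (auto simp: bdd_above_def)
  have "norm (f z * exp (- (\<Sum>i\<in>UNIV. z $ i ^ P))) \<le> C * exp B" if "norm (Re_vec z) < M" for z
  proof -
    let ?g = "Re (\<Sum>i\<in>UNIV. z $ i ^ P)"
    have Re_le: "\<bar>Re (z $ i)\<bar> \<le> M" for i
      using component_le_norm_cart[of "Re_vec z" i] that by (simp add: Re_vec_def)
    obtain j where j: "\<And>i. \<bar>Im (z $ i)\<bar> \<le> \<bar>Im (z $ j)\<bar>"
    proof -
      let ?S = "range (\<lambda>i. \<bar>Im (z $ i)\<bar>)"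
      have "Max ?S \<in> ?S"
        by (rule Max_in) auto
      then obtain j where "Max ?S = \<bar>Im (z $ j)\<bar>"
        by blast
      moreover have "\<bar>Im (z $ i)\<bar> \<le> Max ?S" for i
        by (rule Max_ge) auto
      ultimately show thesis
        using that by metis
    qed
    define t where "t = \<bar>Im (z $ j)\<bar>"
    have "0 \<le> t" "(c + t) ^ N \<le> (c + t) ^ (P - 1)" "(t + M) ^ (P - 1) \<le> (c + t) ^ (P - 1)"
      using \<open>c \<ge> 1\<close> \<open>N < P\<close> \<open>M > 0\<close> by (auto simp: t_def c_def intro!: power_increasing power_mono)
    have "norm z \<le> n * (M + t)"
      using norm_le_card_mult_components[OF Re_le j] unfolding n_def t_def .
    moreover have "n * (c + t) = n * (M + t) + n"
      by (simp add: c_def algebra_simps)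
    ultimately have "1 + norm z \<le> n * (c + t)"
      using \<open>n \<ge> 1\<close> by linarith
    then have "(1 + norm z) ^ N \<le> n ^ N * (c + t) ^ N"
      by (metis power_mono power_mult_distrib add_nonneg_nonneg norm_ge_zero zero_le_one)
    also have "\<dots> \<le> n ^ N * (c + t) ^ (P - 1)"
      using \<open>(c + t) ^ N \<le> _\<close> \<open>n \<ge> 1\<close> by (simp add: mult_left_mono)
    finally have "A * (1 + norm z) ^ N \<le> A * (n ^ N * (c + t) ^ (P - 1))"
      using \<open>A \<ge> 0\<close> by (rule mult_left_mono)
    moreover have "n * (P * M * (t + M) ^ (P - 1)) \<le> n * (P * M * (c + t) ^ (P - 1))"
      using \<open>(t + M) ^ (P - 1) \<le> _\<close> \<open>M > 0\<close> \<open>n \<ge> 1\<close> by (intro mult_left_mono) auto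
    moreover have "t ^ P - n * (P * M * (t + M) ^ (P - 1)) \<le> ?g"
      using Re_sum_powers_ge[OF \<open>4 dvd P\<close> Re_le j] unfolding n_def t_def .
    ultimately have "A * (1 + norm z) ^ N - ?g \<le> B"
      using B[OF \<open>0 \<le> t\<close>] unfolding A'_def by (simp add: algebra_simps)
    have "norm (f z * exp (- (\<Sum>i\<in>UNIV. z $ i ^ P))) = norm (f z) * exp (- ?g)"
      by (simp add: norm_mult)
    also have "\<dots> \<le> C * exp (A * (1 + norm z) ^ N - ?g)"
      using f_bound[of z] by (simp add: exp_diff exp_minus divide_inverse mult_right_mono)
    also have "\<dots> \<le> C * exp B"
      using \<open>A * (1 + norm z) ^ N - ?g \<le> B\<close> \<open>0 \<le> C\<close> by (simp add: mult_left_mono)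
    finally show ?thesis .
  qed
  then show "\<exists>B. \<forall>z. norm (Re_vec z) < M \<longrightarrow> norm (f z * exp (- (\<Sum>i\<in>UNIV. z $ i ^ P))) \<le> B"
    by blast
qed

theorem mainTheorem5:
  fixes lam :: "complex^'n \<Rightarrow> complex" and \<Psi> :: "complex \<Rightarrow> complex"
  assumes "poly_fun_Cn lam"
    and "\<Psi> holomorphic_on UNIV"
    and "finite_order \<Psi>"
  shows "\<exists>\<nu> :: complex^'n \<Rightarrow> complex. holomorphic_Cn \<nu> \<and> moderate_vertical_growth \<nu> \<and>
           {z. \<nu> z = 0} = {z. \<Psi> (lam z) = 0}"
proof -
  obtain K d where "K \<ge> 0" "\<And>z. norm (lam z) \<le> K * (1 + norm z) ^ d"
    using poly_fun_Cn_polynomial_growth[OF assms(1)] by blast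
  then obtain C A N where "A \<ge> 0"
    and \<Psi>_lam_growth: "\<And>z. norm (\<Psi> (lam z)) \<le> C * exp (A * (1 + norm z) ^ N)"
    using finite_order_compose_polynomial_growth[OF assms(3)] by metis
  define P where "P = 4 * (N + 1)"
  define \<nu> where "\<nu> = (\<lambda>z. \<Psi> (lam z) * exp (- (\<Sum>i\<in>UNIV. z $ i ^ P)))"
  have "poly_fun_Cn (\<lambda>z. \<Sum>i\<in>UNIV. z $ i ^ P)"
    by (intro poly_fun_Cn_sum poly_fun_Cn_power poly_fun_Cn.coord) auto
  moreover have "(\<lambda>w. exp (- w)) holomorphic_on UNIV"
    by (intro holomorphic_intros)
  ultimately have "holomorphic_Cn \<nu>"
    unfolding \<nu>_def using assms(1,2)
    by (intro holomorphic_Cn_mult holomorphic_Cn_compose[where h = \<Psi>]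
        holomorphic_Cn_compose[where h = "\<lambda>w. exp (- w)"] poly_fun_Cn_imp_holomorphic_Cn)
  moreover have "moderate_vertical_growth \<nu>"
    unfolding \<nu>_def using \<Psi>_lam_growth \<open>A \<ge> 0\<close>
    by (rule moderate_vertical_growth_mult_exp_neg_sum_powers) (auto simp: P_def)
  moreover have "{z. \<nu> z = 0} = {z. \<Psi> (lam z) = 0}"
    by (simp add: \<nu>_def)
  ultimately show ?thesis
    by blast
qed

end
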